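(* Let $0<q<1$, let $r\ge1$, $s\ge1$ be integers with $r-1\le s$, and $\alpha\in\mathbb{R}\setminus\mathbb{Z}_-$. Let $a_j>0$ real and $b_j\in\mathbb{C}$ ($j=1,\dots,r-1$), and $c_\ell>0$ real and $d_\ell\in\mathbb{C}$ ($\ell=1,\dots,s-1$), with $a_jn+\mathrm{Re}(b_j)\notin\mathbb{Z}_-$ and $c_\ell n+\mathrm{Re}(d_\ell)\notin\mathbb{Z}_-$ for all positive integers $n$ (when $r=1$ there are no $a_j,b_j$; when $s=1$ there are no $c_\ell,d_\ell$). Then for every $z\in\mathbb{C}$, $$\lim_{n\to+\infty}{}_r\phi_s\!\left(\begin{array}{c}q^{-n},q^{a_1n+b_1},\dots,q^{a_{r-1}n+b_{r-1}}\\ q^{\alpha},q^{c_1n+d_1},\dots,q^{c_{s-1}n+d_{s-1}}\end{array};q,q^nz\right)=\sum_{k=0}^{\infty}\frac{(-1)^{(r-s)k}q^{(2+s-r)\binom k2}}{(q^{\alpha};q)_k(q;q)_k}z^k.$$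
   Context: $\mathbb{Z}_-=\{0,-1,-2,\dots\}$. For $w\in\mathbb{C}$, $q^{w}:=e^{w\ln q}$. For $a\in\mathbb{C}$: $(a;q)_0=1$, $(a;q)_k=\prod_{j=0}^{k-1}(1-aq^{j})$, and $(a_1,\dots,a_r;q)_k=\prod_{i=1}^r(a_i;q)_k$. The basic hypergeometric series is $${}_r\phi_s\!\left(\begin{array}{c}a_1,\dots,a_r\\ b_1,\dots,b_s\end{array};q,z\right)=\sum_{k=0}^{\infty}\frac{(a_1,\dots,a_r;q)_k}{(b_1,\dots,b_s;q)_k}(-1)^{(1+s-r)k}q^{(1+s-r)\binom{k}{2}}\frac{z^k}{(q;q)_k};$$ when one numerator parameter is $q^{-n}$ it is a polynomial in $z$ of degree at most $n$. *)

theory Defs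
  imports "HOL-Analysis.Analysis"
begin

definition qpow :: "real \<Rightarrow> complex \<Rightarrow> complex" where
  "qpow q w = exp (w * of_real (ln q))"

definition qpoch :: "complex \<Rightarrow> real \<Rightarrow> nat \<Rightarrow> complex" where
  "qpoch a q k = (\<Prod>j<k. 1 - a * of_real (q ^ j))"

definition basic_hyp :: "complex list \<Rightarrow> complex list \<Rightarrow> real \<Rightarrow> complex \<Rightarrow> complex" where
  "basic_hyp as bs q z =
     (let e = 1 + int (length bs) - int (length as) in
      (\<Sum>k. (\<Prod>a\<leftarrow>as. qpoch a q k) / (\<Prod>b\<leftarrow>bs. qpoch b q k)
            * ((-1) powi (e * int k)) * of_real (q powi (e * int (k choose 2)))
            * z ^ k / qpoch (of_real q) q k))"

end

(*
  The n-th series terminates. Absorbing the factor q^(nk) of its argument into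
  (q^-n;q)_k turns the k-th term into prod_{j<k} (q^n - q^j), which tends to
  (-1)^k q^(k choose 2), times Pochhammer symbols with parameters q^(a_j n + b_j)
  and q^(c_l n + d_l) that tend to 0, so that these symbols tend to 1. Uniformly
  in n the k-th term is bounded by q^(k choose 2) C^k, a summable majorant, and
  Tannery's theorem exchanges limit and sum.
*)
theory Submission
  imports Defs
begin

lemma qpoch_Suc: "qpoch a q (Suc k) = qpoch a q k * (1 - a * of_real (q ^ k))"
  by (simp add: qpoch_def)

lemma norm_qpoch_le:
  assumes "0 \<le> q" "q \<le> 1" "norm a \<le> 1"
  shows "norm (qpoch a q k) \<le> 2 ^ k"
proof -
  have "norm (qpoch a q k) = (\<Prod>j<k. norm (1 - a * of_real (q ^ j)))"
    unfolding qpoch_def by (simp add: prod_norm)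
  also have "\<dots> \<le> (\<Prod>j<k. 2)"
  proof (intro prod_mono conjI norm_ge_zero)
    fix j
    have "norm (1 - a * of_real (q ^ j)) \<le> 1 + norm a * q ^ j"
      using norm_triangle_ineq4[of 1 "a * of_real (q ^ j)"] assms by (simp add: norm_mult norm_power)
    also have "norm a * q ^ j \<le> 1"
      using assms by (intro mult_le_one power_le_one) auto
    finally show "norm (1 - a * of_real (q ^ j)) \<le> 2" by simp
  qed
  finally show ?thesis by simp
qed

lemma norm_qpoch_ge_from:
  assumes "0 \<le> q" "q \<le> 1" "norm a * q ^ J \<le> 1/2" "J \<le> k"
  shows "norm (qpoch a q J) * (1/2) ^ (k - J) \<le> norm (qpoch a q k)"
  using \<open>J \<le> k\<close>
proof (induction k rule: dec_induct)
  case (step k)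
  have "norm a * q ^ k \<le> norm a * q ^ J"
    using step assms by (intro mult_left_mono power_decreasing) auto
  then have "1/2 \<le> 1 - norm (a * of_real (q ^ k))"
    using assms by (simp add: norm_mult norm_power)
  also have "\<dots> \<le> norm (1 - a * of_real (q ^ k))"
    by (metis norm_one norm_triangle_ineq2)
  finally have "norm (qpoch a q J) * (1/2) ^ (k - J) * (1/2)
                \<le> norm (qpoch a q k) * norm (1 - a * of_real (q ^ k))"
    using step.IH by (intro mult_mono) auto
  then show ?case
    using step.hyps by (simp add: qpoch_Suc norm_mult Suc_diff_le)
qed simp

lemma norm_qpoch_ge_half_power:
  assumes "0 \<le> q" "q \<le> 1" "norm a \<le> 1/2"
  shows "(1/2) ^ k \<le> norm (qpoch a q k)"
  using norm_qpoch_ge_from[OF assms(1,2), of a 0 k] assms(3) by (simp add: qpoch_def)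

lemma norm_qpoch_of_real_ge:
  assumes "0 \<le> q" "q \<le> 1"
  shows "(1 - q) ^ k \<le> norm (qpoch (of_real q) q k)"
proof -
  have "(\<Prod>j<k. 1 - q) \<le> (\<Prod>j<k. norm (1 - of_real q * of_real (q ^ j) :: complex))"
  proof (intro prod_mono conjI)
    fix j
    have "q * q ^ j \<le> q" "q * q ^ j \<le> 1"
      using assms by (auto intro: mult_left_le mult_le_one power_le_one)
    moreover have "1 - of_real q * of_real (q ^ j) = (of_real (1 - q * q ^ j) :: complex)"
      by simp
    ultimately show "1 - q \<le> norm (1 - of_real q * of_real (q ^ j) :: complex)"
      by (simp only: norm_of_real)
  qed (use assms in simp)
  then show ?thesis
    unfolding qpoch_def by (simp add: prod_norm)
qed

lemma eventually_norm_qpoch_ge_half_power: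
  assumes q: "0 \<le> q" "q < 1" and a: "\<And>j. a * of_real (q ^ j) \<noteq> 1"
  obtains c where "c > 0" "eventually (\<lambda>k. c * (1/2) ^ k \<le> norm (qpoch a q k)) sequentially"
proof -
  have "(\<lambda>J. norm a * q ^ J) \<longlonglongrightarrow> norm a * 0"
    using q by (intro tendsto_mult_left LIMSEQ_power_zero) auto
  then have "eventually (\<lambda>J. norm a * q ^ J < 1/2) sequentially"
    by (rule order_tendstoD(2)) simp
  then obtain J where J: "norm a * q ^ J \<le> 1/2"
    unfolding eventually_sequentially by (meson less_imp_le order_refl)
  have "qpoch a q J \<noteq> 0"
    using a unfolding qpoch_def by (simp add: right_minus_eq)
  moreover have "norm (qpoch a q J) * (1/2) ^ k \<le> norm (qpoch a q k)" if "k \<ge> J" for k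
  proof -
    have "norm (qpoch a q J) * (1/2) ^ k \<le> norm (qpoch a q J) * (1/2) ^ (k - J)"
      by (intro mult_left_mono power_decreasing) auto
    also have "\<dots> \<le> norm (qpoch a q k)"
      using q J that by (intro norm_qpoch_ge_from) auto
    finally show ?thesis .
  qed
  ultimately show ?thesis
    using that[of "norm (qpoch a q J)"] unfolding eventually_sequentially by auto
qed

lemma qpow_of_real_mult_power_ne_1:
  assumes q: "0 < q" "q < 1" and \<alpha>: "\<forall>m::nat. \<alpha> \<noteq> - real m"
  shows "qpow q (of_real \<alpha>) * of_real (q ^ j) \<noteq> 1"
proof
  assume "qpow q (of_real \<alpha>) * of_real (q ^ j) = 1"
  moreover have "qpow q (of_real \<alpha>) * of_real (q ^ j) = of_real (exp ((\<alpha> + real j) * ln q))"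
    unfolding qpow_def using q
    by (simp add: distrib_right exp_add exp_of_nat_mult flip: exp_of_real)
  ultimately have "(\<alpha> + real j) * ln q = 0"
    by (metis exp_eq_one_iff of_real_eq_1_iff)
  with q have "\<alpha> = - real j" by simp
  with \<alpha> show False by blast
qed

lemma tendsto_qpoch_1:
  assumes "f \<longlonglongrightarrow> 0"
  shows "(\<lambda>n. qpoch (f n) q k) \<longlonglongrightarrow> 1"
proof -
  have "(\<lambda>n. \<Prod>j<k. 1 - f n * of_real (q ^ j)) \<longlonglongrightarrow> (\<Prod>j<k. 1 - 0 * of_real (q ^ j))"
    by (intro tendsto_prod tendsto_intros assms)
  then show ?thesis unfolding qpoch_def by simp
qed

lemma qpow_linear_tendsto_0:
  assumes q: "0 < q" "q < 1" and a: "a > 0"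
  shows "(\<lambda>n. qpow q (of_real (a * real n) + b)) \<longlonglongrightarrow> 0"
proof (rule tendsto_norm_zero_cancel)
  have norm_eq: "norm (qpow q (of_real (a * real n) + b)) = exp (Re b * ln q) * exp (a * ln q) ^ n" for n
  proof -
    have "norm (qpow q (of_real (a * real n) + b)) = exp (Re b * ln q + real n * (a * ln q))"
      unfolding qpow_def by (simp add: algebra_simps)
    then show ?thesis
      by (simp add: exp_add exp_of_nat_mult)
  qed
  have "exp (a * ln q) < 1"
    using q a by (simp add: mult_pos_neg)
  then have "(\<lambda>n. exp (Re b * ln q) * exp (a * ln q) ^ n) \<longlonglongrightarrow> exp (Re b * ln q) * 0"
    by (intro tendsto_mult_left LIMSEQ_power_zero) simp
  then show "(\<lambda>n. norm (qpow q (of_real (a * real n) + b))) \<longlonglongrightarrow> 0"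
    unfolding norm_eq by simp
qed

lemma sum_lessThan_eq_choose_2: "(\<Sum>j<k. j) = k choose 2"
proof (induction k)
  case (Suc k)
  then show ?case using binomial_Suc_Suc[of k 1] by (simp add: numeral_2_eq_2)
qed simp

lemma prod_lessThan_power: "(\<Prod>j<k. (x::'a::comm_monoid_mult) ^ j) = x ^ (k choose 2)"
  by (simp add: power_sum[symmetric] sum_lessThan_eq_choose_2)

lemma norm_prod_power_diff_le:
  assumes "0 \<le> q" "q \<le> 1"
  shows "norm (\<Prod>j<k. of_real (q ^ n) - of_real (q ^ j) :: complex) \<le> q ^ (k choose 2)"
proof (cases "k \<le> n")
  case True
  have "norm (\<Prod>j<k. of_real (q ^ n) - of_real (q ^ j) :: complex)
        = (\<Prod>j<k. \<bar>q ^ n - q ^ j\<bar>)"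
    by (simp add: abs_prod del: of_real_power flip: of_real_diff of_real_prod)
  also have "\<dots> \<le> (\<Prod>j<k. q ^ j)"
  proof (intro prod_mono conjI abs_ge_zero)
    fix j assume "j \<in> {..<k}"
    then have "q ^ n \<le> q ^ j"
      using True assms by (intro power_decreasing) auto
    then show "\<bar>q ^ n - q ^ j\<bar> \<le> q ^ j"
      using assms by simp
  qed
  finally show ?thesis by (simp add: prod_lessThan_power)
next
  case False
  then have "(\<Prod>j<k. of_real (q ^ n) - of_real (q ^ j) :: complex) = 0"
    by (intro prod_zero) auto
  with assms show ?thesis by (metis norm_zero zero_le_power)
qed

lemma tendsto_prod_power_diff:
  assumes "0 \<le> q" "q < 1"
  shows "(\<lambda>n. \<Prod>j<k. of_real (q ^ n) - of_real (q ^ j) :: complex)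
         \<longlonglongrightarrow> (-1) ^ k * of_real (q ^ (k choose 2))"
proof -
  have "(\<lambda>n. of_real (q ^ n) :: complex) \<longlonglongrightarrow> 0"
    using assms by (metis tendsto_of_real_iff LIMSEQ_power_zero of_real_0 abs_of_nonneg real_norm_def)
  then have "(\<lambda>n. \<Prod>j<k. of_real (q ^ n) - of_real (q ^ j) :: complex)
             \<longlonglongrightarrow> (\<Prod>j<k. 0 - of_real (q ^ j))"
    by (intro tendsto_prod tendsto_diff tendsto_const)
  also have "(\<Prod>j<k. 0 - of_real (q ^ j) :: complex) = (-1) ^ k * of_real (q ^ (k choose 2))"
    by (simp add: prod_uminus flip: prod_lessThan_power)
  finally show ?thesis .
qed

lemma summable_power_choose_2_mult_power:
  fixes q x :: real
  assumes "0 \<le> q" "q < 1"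
  shows "summable (\<lambda>k. q ^ (k choose 2) * x ^ k)"
proof -
  have "(\<lambda>k. q ^ k * \<bar>x\<bar>) \<longlonglongrightarrow> 0 * \<bar>x\<bar>"
    using assms by (intro tendsto_mult_right LIMSEQ_power_zero) auto
  then have "eventually (\<lambda>k. q ^ k * \<bar>x\<bar> < 1/2) sequentially"
    by (rule order_tendstoD(2)) simp
  then obtain N where N: "\<And>k. k \<ge> N \<Longrightarrow> q ^ k * \<bar>x\<bar> < 1/2"
    unfolding eventually_sequentially by blast
  show ?thesis
  proof (rule summable_ratio_test[of "1/2" N])
    fix k assume "k \<ge> N"
    have "Suc k choose 2 = k + (k choose 2)"
      using binomial_Suc_Suc[of k 1] by (simp add: numeral_2_eq_2)
    then have "norm (q ^ (Suc k choose 2) * x ^ Suc k) = (q ^ k * \<bar>x\<bar>) * norm (q ^ (k choose 2) * x ^ k)"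
      using assms by (simp add: power_add abs_mult power_abs)
    also have "\<dots> \<le> 1/2 * norm (q ^ (k choose 2) * x ^ k)"
      using N[OF \<open>k \<ge> N\<close>] by (intro mult_right_mono) auto
    finally show "norm (q ^ (Suc k choose 2) * x ^ Suc k) \<le> 1/2 * norm (q ^ (k choose 2) * x ^ k)" .
  qed simp
qed

lemma tendsto_suminf_terminating:
  fixes R :: "nat \<Rightarrow> nat \<Rightarrow> complex" and G :: "nat \<Rightarrow> complex"
  assumes q: "0 \<le> q" "q < 1"
    and R_lim: "\<And>k. (\<lambda>n. R n k) \<longlonglongrightarrow> 1"
    and R_bound: "eventually (\<lambda>n. \<forall>k. norm (R n k) \<le> B ^ k) sequentially"
    and G_bound: "eventually (\<lambda>k. norm (G k) \<le> D * C ^ k) sequentially"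
  shows "(\<lambda>n. \<Sum>k. (\<Prod>j<k. of_real (q ^ n) - of_real (q ^ j)) * R n k * G k)
         \<longlonglongrightarrow> (\<Sum>k. (-1) ^ k * of_real (q ^ (k choose 2)) * G k)"
proof -
  define M where "M k = \<bar>D\<bar> * (q ^ (k choose 2) * (\<bar>B\<bar> * \<bar>C\<bar>) ^ k)" for k
  have "summable M"
    unfolding M_def by (intro summable_mult summable_power_choose_2_mult_power q)
  moreover have "eventually (\<lambda>(k, n). norm ((\<Prod>j<k. of_real (q ^ n) - of_real (q ^ j)) * R n k * G k) \<le> M k)
      (at_top \<times>\<^sub>F sequentially)"
  proof -
    obtain N where N: "\<And>n k. n \<ge> N \<Longrightarrow> norm (R n k) \<le> B ^ k"
      using R_bound unfolding eventually_sequentially by blast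
    obtain K where K: "\<And>k. k \<ge> K \<Longrightarrow> norm (G k) \<le> D * C ^ k"
      using G_bound unfolding eventually_sequentially by blast
    have "norm ((\<Prod>j<k. of_real (q ^ n) - of_real (q ^ j)) * R n k * G k) \<le> M k"
      if "k \<ge> K" "n \<ge> N" for k n
    proof -
      have "norm ((\<Prod>j<k. of_real (q ^ n) - of_real (q ^ j)) * R n k * G k)
            \<le> q ^ (k choose 2) * \<bar>B\<bar> ^ k * (\<bar>D\<bar> * \<bar>C\<bar> ^ k)"
        unfolding norm_mult
      proof (intro mult_mono norm_prod_power_diff_le q)
        show "norm (R n k) \<le> \<bar>B\<bar> ^ k"
          using N[OF \<open>n \<ge> N\<close>, of k] by (metis power_abs abs_ge_self order_trans)
        show "norm (G k) \<le> \<bar>D\<bar> * \<bar>C\<bar> ^ k"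
          using K[OF \<open>k \<ge> K\<close>] by (metis abs_mult power_abs abs_ge_self order_trans)
      qed (use q in auto)
      then show ?thesis unfolding M_def by (simp add: power_mult_distrib mult_ac)
    qed
    then show ?thesis
      unfolding eventually_prod_sequentially by (intro exI[of _ "max K N"]) auto
  qed
  moreover have "(\<lambda>n. (\<Prod>j<k. of_real (q ^ n) - of_real (q ^ j)) * R n k * G k)
                 \<longlonglongrightarrow> (-1) ^ k * of_real (q ^ (k choose 2)) * G k" for k
    using tendsto_mult[OF tendsto_mult[OF tendsto_prod_power_diff[OF q] R_lim] tendsto_const] by simp
  ultimately show ?thesis
    using tannerys_theorem[of "\<lambda>k n. (\<Prod>j<k. of_real (q ^ n) - of_real (q ^ j)) * R n k * G k"] by auto
qed

lemma qpow_neg_of_nat: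
  assumes "0 < q"
  shows "qpow q (- of_nat n) = of_real (inverse (q ^ n))"
proof -
  have "qpow q (- of_nat n) = of_real (exp (- real n * ln q))"
    unfolding qpow_def by (simp flip: exp_of_real)
  also have "exp (- real n * ln q) = inverse (exp (ln q) ^ n)"
    by (simp add: exp_minus exp_of_nat_mult)
  finally show ?thesis using assms by simp
qed

lemma qpoch_qpow_neg_of_nat_mult_power:
  assumes "0 < q"
  shows "qpoch (qpow q (- of_nat n)) q k * of_real (q ^ n) ^ k
         = (\<Prod>j<k. of_real (q ^ n) - of_real (q ^ j))"
proof -
  have "qpoch (qpow q (- of_nat n)) q k * of_real (q ^ n) ^ k
        = (\<Prod>j<k. (1 - of_real (inverse (q ^ n)) * of_real (q ^ j)) * of_real (q ^ n))"
    unfolding qpoch_def qpow_neg_of_nat[OF assms] by (simp add: prod.distrib)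
  also have "\<dots> = (\<Prod>j<k. of_real (q ^ n) - of_real (q ^ j))"
    using assms by (intro prod.cong refl) (simp add: field_simps)
  finally show ?thesis .
qed

lemma basic_hyp_terminating:
  assumes q: "0 < q" and E: "E + length as = length bs + 1"
  shows "basic_hyp (qpow q (- of_nat n) # as) (a # bs) q (of_real (q ^ n) * z) =
    (\<Sum>k. (\<Prod>j<k. of_real (q ^ n) - of_real (q ^ j))
         * ((\<Prod>x\<leftarrow>as. qpoch x q k) / (\<Prod>y\<leftarrow>bs. qpoch y q k))
         * ((-1) ^ (E * k) * of_real (q ^ (E * (k choose 2))) * z ^ k
             / (qpoch a q k * qpoch (of_real q) q k)))"
proof -
  have e: "1 + int (length (a # bs)) - int (length (qpow q (- of_nat n) # as)) = int E"
    using E by simp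
  show ?thesis
    unfolding basic_hyp_def Let_def e
    by (intro suminf_cong)
      (simp flip: qpoch_qpow_neg_of_nat_mult_power[OF q] of_nat_mult
        add: power_int_of_nat power_mult_distrib field_simps del: of_real_power)
qed

lemma tendsto_prod_qpoch_ratio_1:
  assumes "\<And>j. j \<in> I \<Longrightarrow> X j \<longlonglongrightarrow> 0" "\<And>l. l \<in> K \<Longrightarrow> Y l \<longlonglongrightarrow> 0"
  shows "(\<lambda>n. (\<Prod>j\<in>I. qpoch (X j n) q k) / (\<Prod>l\<in>K. qpoch (Y l n) q k)) \<longlonglongrightarrow> 1"
proof -
  have "(\<lambda>n. (\<Prod>j\<in>I. qpoch (X j n) q k) / (\<Prod>l\<in>K. qpoch (Y l n) q k))
        \<longlonglongrightarrow> (\<Prod>j\<in>I. 1) / (\<Prod>l\<in>K. 1)"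
    by (intro tendsto_divide tendsto_prod tendsto_qpoch_1 assms) auto
  then show ?thesis by simp
qed

lemma eventually_norm_prod_qpoch_ratio_le:
  assumes q: "0 \<le> q" "q \<le> 1" and fin: "finite I" "finite K"
    and lim: "\<And>j. j \<in> I \<Longrightarrow> X j \<longlonglongrightarrow> 0" "\<And>l. l \<in> K \<Longrightarrow> Y l \<longlonglongrightarrow> 0"
  shows "eventually (\<lambda>n. \<forall>k. norm ((\<Prod>j\<in>I. qpoch (X j n) q k) / (\<Prod>l\<in>K. qpoch (Y l n) q k))
                              \<le> (2 ^ (card I + card K)) ^ k) sequentially"
proof -
  have small: "eventually (\<lambda>n. norm (f n) \<le> 1/2) sequentially" if "f \<longlonglongrightarrow> 0" for f :: "nat \<Rightarrow> complex"
    using order_tendstoD(2)[OF tendsto_norm_zero[OF that], of "1/2"]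
    by (auto elim: eventually_mono)
  have "eventually (\<lambda>n. (\<forall>j\<in>I. norm (X j n) \<le> 1/2) \<and> (\<forall>l\<in>K. norm (Y l n) \<le> 1/2)) sequentially"
    using fin lim by (intro eventually_conj eventually_ball_finite ballI small) auto
  then show ?thesis
  proof eventually_elim
    case (elim n)
    show ?case
    proof
      fix k
      have "norm (\<Prod>j\<in>I. qpoch (X j n) q k) \<le> (\<Prod>j\<in>I. 2 ^ k)"
        unfolding prod_norm[symmetric] using elim q by (intro prod_mono conjI norm_ge_zero norm_qpoch_le) auto
      moreover have "(\<Prod>l\<in>K. (1/2) ^ k) \<le> norm (\<Prod>l\<in>K. qpoch (Y l n) q k)"
        unfolding prod_norm[symmetric] using elim q by (intro prod_mono conjI norm_qpoch_ge_half_power) auto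
      ultimately have "norm ((\<Prod>j\<in>I. qpoch (X j n) q k) / (\<Prod>l\<in>K. qpoch (Y l n) q k))
                       \<le> (2 ^ k) ^ card I / ((1/2) ^ k) ^ card K"
        unfolding norm_divide by (intro frac_le) auto
      also have "\<dots> = (2 ^ (card I + card K)) ^ k"
        by (simp add: power_add power_divide power_mult_distrib flip: power_mult) (simp add: mult.commute)
      finally show "norm ((\<Prod>j\<in>I. qpoch (X j n) q k) / (\<Prod>l\<in>K. qpoch (Y l n) q k))
                    \<le> (2 ^ (card I + card K)) ^ k" .
    qed
  qed
qed

lemma eventually_norm_confluent_coeff_le:
  assumes q: "0 \<le> q" "q < 1" and a: "\<And>j. a * of_real (q ^ j) \<noteq> 1"
  obtains D where "eventually (\<lambda>k. norm ((-1) ^ (E * k) * of_real (q ^ (E * (k choose 2))) * z ^ k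
                      / (qpoch a q k * qpoch (of_real q) q k)) \<le> D * (2 * norm z / (1 - q)) ^ k) sequentially"
proof -
  obtain c where c: "c > 0" "eventually (\<lambda>k. c * (1/2) ^ k \<le> norm (qpoch a q k)) sequentially"
    using eventually_norm_qpoch_ge_half_power[OF q a] by blast
  have "eventually (\<lambda>k. norm ((-1) ^ (E * k) * of_real (q ^ (E * (k choose 2))) * z ^ k
                      / (qpoch a q k * qpoch (of_real q) q k)) \<le> 1 / c * (2 * norm z / (1 - q)) ^ k) sequentially"
    using c(2)
  proof eventually_elim
    case (elim k)
    have "norm ((-1) ^ (E * k) * of_real (q ^ (E * (k choose 2))) * z ^ k
            / (qpoch a q k * qpoch (of_real q) q k))
          \<le> 1 * norm z ^ k / (c * (1/2) ^ k * (1 - q) ^ k)"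
      unfolding norm_divide norm_mult
      using q c elim norm_qpoch_of_real_ge[of q k]
      by (intro frac_le mult_mono) (auto simp: norm_power power_le_one)
    also have "\<dots> = 1 / c * (2 * norm z / (1 - q)) ^ k"
      by (simp add: power_mult_distrib power_divide field_simps)
    finally show ?case .
  qed
  then show ?thesis by (rule that)
qed

lemma power_int_minus_one_if: "((-1::'a::field) powi m) = (if even m then 1 else -1)"
proof (cases "m \<ge> 0")
  case True
  then obtain N where "m = int N" using nonneg_eq_int by blast
  then show ?thesis by (simp add: power_int_def)
next
  case False
  then show ?thesis by (simp add: power_int_def even_nat_iff)
qed

theorem proposition6:
  fixes q :: real and r s :: nat and \<alpha> :: real
    and a c :: "nat \<Rightarrow> real" and b d :: "nat \<Rightarrow> complex" and z :: complex
  assumes q: "0 < q" "q < 1"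
    and rs: "r \<ge> 1" "s \<ge> 1" "r - 1 \<le> s"
    and alpha: "\<forall>m::nat. \<alpha> \<noteq> - real m"
    and a_pos: "\<forall>j\<in>{1..r-1}. a j > 0"
    and c_pos: "\<forall>l\<in>{1..s-1}. c l > 0"
    and ab: "\<forall>j\<in>{1..r-1}. \<forall>n::nat. n \<ge> 1 \<longrightarrow> (\<forall>m::nat. a j * real n + Re (b j) \<noteq> - real m)"
    and cd: "\<forall>l\<in>{1..s-1}. \<forall>n::nat. n \<ge> 1 \<longrightarrow> (\<forall>m::nat. c l * real n + Re (d l) \<noteq> - real m)"
  shows "(\<lambda>n. basic_hyp
            (qpow q (- of_nat n) # map (\<lambda>j. qpow q (of_real (a j * real n) + b j)) [1..<r])
            (qpow q (of_real \<alpha>) # map (\<lambda>l. qpow q (of_real (c l * real n) + d l)) [1..<s])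
            q (of_real (q ^ n) * z))
         \<longlonglongrightarrow>
         (\<Sum>k. ((-1) powi ((int r - int s) * int k))
                * of_real (q powi ((2 + int s - int r) * int (k choose 2)))
                / (qpoch (qpow q (of_real \<alpha>)) q k * qpoch (of_real q) q k) * z ^ k)"
proof -
  define E where "E = s + 1 - r"
  define A where "A = qpow q (of_real \<alpha>)"
  define X where "X j n = qpow q (of_real (a j * real n) + b j)" for j n
  define Y where "Y l n = qpow q (of_real (c l * real n) + d l)" for l n
  define R where "R n k = (\<Prod>j\<in>{1..<r}. qpoch (X j n) q k) / (\<Prod>l\<in>{1..<s}. qpoch (Y l n) q k)" for n k
  define G where "G k = (-1) ^ (E * k) * of_real (q ^ (E * (k choose 2))) * z ^ k
                        / (qpoch A q k * qpoch (of_real q) q k)" for k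
  have X: "X j \<longlonglongrightarrow> 0" if "j \<in> {1..<r}" for j
    unfolding X_def using q a_pos that by (intro qpow_linear_tendsto_0) auto
  have Y: "Y l \<longlonglongrightarrow> 0" if "l \<in> {1..<s}" for l
    unfolding Y_def using q c_pos that by (intro qpow_linear_tendsto_0) auto
  obtain D where G: "eventually (\<lambda>k. norm (G k) \<le> D * (2 * norm z / (1 - q)) ^ k) sequentially"
    unfolding G_def A_def
    using eventually_norm_confluent_coeff_le q qpow_of_real_mult_power_ne_1[OF q alpha]
    by (meson less_imp_le)
  have "(\<lambda>n. \<Sum>k. (\<Prod>j<k. of_real (q ^ n) - of_real (q ^ j)) * R n k * G k)
             \<longlonglongrightarrow> (\<Sum>k. (-1) ^ k * of_real (q ^ (k choose 2)) * G k)"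
    unfolding R_def
    by (rule tendsto_suminf_terminating[OF _ _ tendsto_prod_qpoch_ratio_1
          eventually_norm_prod_qpoch_ratio_le G]) (use q X Y in auto)
  moreover have "basic_hyp
            (qpow q (- of_nat n) # map (\<lambda>j. qpow q (of_real (a j * real n) + b j)) [1..<r])
            (qpow q (of_real \<alpha>) # map (\<lambda>l. qpow q (of_real (c l * real n) + d l)) [1..<s])
            q (of_real (q ^ n) * z) = (\<Sum>k. (\<Prod>j<k. of_real (q ^ n) - of_real (q ^ j)) * R n k * G k)" for n
    unfolding R_def G_def X_def Y_def A_def using q rs
    by (subst basic_hyp_terminating[where E = E]) (auto simp: E_def o_def simp flip: prod.distinct_set_conv_list)
  moreover have "(-1) ^ k * of_real (q ^ (k choose 2)) * G k
      = (-1) powi ((int r - int s) * int k) * of_real (q powi ((2 + int s - int r) * int (k choose 2)))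
        / (qpoch (qpow q (of_real \<alpha>)) q k * qpoch (of_real q) q k) * z ^ k" for k
  proof -
    have exponents: "int r - int s = 1 - int E" "2 + int s - int r = int (Suc E)"
      using rs by (auto simp: E_def)
    have "(-1::complex) powi ((1 - int E) * int k) = (-1) ^ k * (-1) ^ (E * k)"
      by (simp add: power_int_minus_one_if even_mult_iff minus_one_power_iff)
    moreover have "q powi (int (Suc E) * int (k choose 2)) = q ^ (k choose 2) * q ^ (E * (k choose 2))"
      by (simp only: power_int_of_nat flip: of_nat_mult) (simp add: power_add)
    ultimately show ?thesis
      unfolding G_def A_def exponents by (simp add: field_simps)
  qed
  ultimately show ?thesis by simp
qed

end
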